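(* Let $\mathcal{E},\mathcal{F}$ satisfy (a) $d^{(k)}_{ij}\ge0$ for all $1\le i<j\le5$, $1\le k\le4$ with $i+j+k=8$, and (b) if $d^{(1)}_{15},d^{(1)}_{24},d^{(4)}_{12}<0$ then $d^{(1)}_{25}=0$. Suppose that either (i) $(I,J,K)=(1,2,1)$ and $d^{(1)}_{15},d^{(1)}_{24},d^{(4)}_{12}<0$; (ii) $(I,J,K)=(4,5,1)$ and $d^{(1)}_{15},d^{(1)}_{24}<0$; or (iii) $(I,J,K)=(4,5,4)$. Then there are at least $I+J+K-3$ triples accessory to $(I,J,K)$. Moreover, in case (i) $\nu_{IJK}=0$, and in cases (ii) and (iii) $d^{(K)}_{IJ}\ge1$.
   Context: Work over $\mathbb{C}$. Fix $g\ge0$, $N=g+4$, $\mathcal{E}\cong\bigoplus_{k=1}^4\mathcal{O}_{\mathbb{P}^1}(e_k)$ ($1\le e_1\le\dots\le e_4$, $\sum e_k=N$), $\mathcal{F}\cong\bigoplus_{i=1}^5\mathcal{O}(f_i)$ ($f_1\le\dots\le f_5$, $\sum f_i=2N$); $d^{(k)}_{ij}=f_i+f_j+e_k-N$ for $i\ne j$. A triple accessory to $(I,J,K)$ is a pair $(\{i,j\},k)$ with $i\ne j$, $d^{(k)}_{ij}\ge0$ and at least one of: (1) $\{i,j\}=\{I,J\}$; (2) $k=K$ and $\{i,j\}=\{I,j'\}$, $j'\notin\{I,J\}$; (3) $k=K$ and $\{i,j\}=\{i',J\}$, $i'\notin\{I,J\}$. Sections of $V=H^0(\bigwedge^2\mathcal{F}\otimes\mathcal{E}\otimes\det\mathcal{E}^\vee)$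 are quadruples of $5\times5$ alternating matrices with $(i,j)$ entry $a^{(k)}_{ij}$ of $A_k$ a homogeneous form of degree $d^{(k)}_{ij}$. A section is in normal form of type $(I,J,K)$ at $p$ (uniformizer $u$) if $a^{(k)}_{IJ}\equiv0\pmod u$ for all $k$, $a^{(K)}_{Ij}\equiv0\pmod u$ for all $j$, $a^{(K)}_{iJ}\equiv0\pmod u$ for all $i$, $a^{(K)}_{IJ}\equiv0\pmod{u^2}$. $\nu_{IJK}=\dim\widetilde{\mathcal{U}}_{IJK}-\dim\mathcal{U}_{IJK}$ where $\mathcal{U}_{IJK}\subset V$ is the locus in normal form of type $(I,J,K)$ at $0\in\mathbb{P}^1$ and $\widetilde{\mathcal{U}}_{IJK}$ the locus in normal form of type $(I,J,K)$ at some point of $\mathbb{P}^1$. *)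

theory Defs
  imports Complex_Main "HOL-Library.Poly_Mapping"
begin

text \<open>Coordinates of a section: (k,i,j,m) is the coefficient of x^m y^(d-m) in the
  entry a^(k)_ij (stored only for i < j) of the form of degree d = d^(k)_ij.\<close>
type_synonym coord = "nat \<times> nat \<times> nat \<times> nat"
type_synonym sect = "coord \<Rightarrow> complex"

definition ddeg :: "(nat \<Rightarrow> int) \<Rightarrow> (nat \<Rightarrow> int) \<Rightarrow> int \<Rightarrow> nat \<Rightarrow> nat \<Rightarrow> nat \<Rightarrow> int" where
  "ddeg e f N k i j = f i + f j + e k - N"

definition sections_V :: "(nat \<Rightarrow> int) \<Rightarrow> (nat \<Rightarrow> int) \<Rightarrow> int \<Rightarrow> sect set" where
  "sections_V e f N = {s. \<forall>k i j m. s (k,i,j,m) \<noteq> 0 \<longrightarrow>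
      (1 \<le> k \<and> k \<le> 4 \<and> 1 \<le> i \<and> i < j \<and> j \<le> 5 \<and> int m \<le> ddeg e f N k i j)}"

text \<open>Coefficient sequence of the entry a^(k)_ij (alternating matrix).\<close>
definition entry :: "sect \<Rightarrow> nat \<Rightarrow> nat \<Rightarrow> nat \<Rightarrow> nat \<Rightarrow> complex" where
  "entry s k i j m = (if i < j then s (k,i,j,m) else if j < i then - s (k,j,i,m) else 0)"

text \<open>Multiplication of a binary form (coefficients of x^m y^(.)) by the linear form
  beta*x - alpha*y, which cuts out the point [alpha:beta] of P^1.\<close>
definition lin_mul :: "complex \<Rightarrow> complex \<Rightarrow> (nat \<Rightarrow> complex) \<Rightarrow> nat \<Rightarrow> complex" where
  "lin_mul \<alpha> \<beta> G m = (if m = 0 then 0 else \<beta> * G (m - 1)) - \<alpha> * G m"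

text \<open>A form of degree d with coefficients c is congruent to 0 modulo u^r at [alpha:beta],
  i.e. it is divisible by (beta*x - alpha*y)^r.\<close>
definition vanish_ord :: "complex \<Rightarrow> complex \<Rightarrow> nat \<Rightarrow> int \<Rightarrow> (nat \<Rightarrow> complex) \<Rightarrow> bool" where
  "vanish_ord \<alpha> \<beta> r d c \<longleftrightarrow>
     (\<exists>G. (\<forall>m. d < int m + int r \<longrightarrow> G m = 0) \<and>
          (\<forall>m. int m \<le> d \<longrightarrow> c m = ((lin_mul \<alpha> \<beta>) ^^ r) G m))"

definition normal_form ::
  "(nat \<Rightarrow> int) \<Rightarrow> (nat \<Rightarrow> int) \<Rightarrow> int \<Rightarrow> nat \<Rightarrow> nat \<Rightarrow> nat \<Rightarrow> complex \<Rightarrow> complex \<Rightarrow> sect \<Rightarrow> bool" where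
  "normal_form e f N I J K \<alpha> \<beta> s \<longleftrightarrow>
     (\<forall>k\<in>{1..4}. vanish_ord \<alpha> \<beta> 1 (ddeg e f N k I J) (entry s k I J)) \<and>
     (\<forall>j\<in>{1..5}. vanish_ord \<alpha> \<beta> 1 (ddeg e f N K I j) (entry s K I j)) \<and>
     (\<forall>i\<in>{1..5}. vanish_ord \<alpha> \<beta> 1 (ddeg e f N K i J) (entry s K i J)) \<and>
     vanish_ord \<alpha> \<beta> 2 (ddeg e f N K I J) (entry s K I J)"

text \<open>U_IJK: normal form at the point 0 = [0:1]; tilde U_IJK: normal form at some point.\<close>
definition U_loc :: "(nat \<Rightarrow> int) \<Rightarrow> (nat \<Rightarrow> int) \<Rightarrow> int \<Rightarrow> nat \<Rightarrow> nat \<Rightarrow> nat \<Rightarrow> sect set" where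
  "U_loc e f N I J K = {s \<in> sections_V e f N. normal_form e f N I J K 0 1 s}"

definition U_tilde :: "(nat \<Rightarrow> int) \<Rightarrow> (nat \<Rightarrow> int) \<Rightarrow> int \<Rightarrow> nat \<Rightarrow> nat \<Rightarrow> nat \<Rightarrow> sect set" where
  "U_tilde e f N I J K = {s \<in> sections_V e f N.
      \<exists>\<alpha> \<beta>. (\<alpha>, \<beta>) \<noteq> (0, 0) \<and> normal_form e f N I J K \<alpha> \<beta> s}"

text \<open>Algebraic dimension of a subset S of affine space (coordinates indexed by 'c):
  the maximal number of coordinate functions that are algebraically independent on S,
  i.e. such that no nonzero polynomial in them vanishes identically on S
  (= dimension of the Zariski closure of S).\<close>
definition mpoly_eval :: "(('c \<Rightarrow>\<^sub>0 nat) \<Rightarrow>\<^sub>0 complex) \<Rightarrow> ('c \<Rightarrow> complex) \<Rightarrow> complex" where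
  "mpoly_eval P x = (\<Sum>mon\<in>Poly_Mapping.keys P. Poly_Mapping.lookup P mon * (\<Prod>v\<in>Poly_Mapping.keys (mon :: 'c \<Rightarrow>\<^sub>0 nat). x v ^ Poly_Mapping.lookup mon v))"

definition alg_indep_on :: "('c \<Rightarrow> complex) set \<Rightarrow> 'c set \<Rightarrow> bool" where
  "alg_indep_on S C \<longleftrightarrow>
     (\<forall>P. P \<noteq> 0 \<and> (\<forall>m\<in>Poly_Mapping.keys P. Poly_Mapping.keys m \<subseteq> C) \<longrightarrow> (\<exists>x\<in>S. mpoly_eval P x \<noteq> 0))"

definition alg_dim :: "('c \<Rightarrow> complex) set \<Rightarrow> nat" where
  "alg_dim S = Max {card C | C. finite C \<and> alg_indep_on S C}"

definition nu :: "(nat \<Rightarrow> int) \<Rightarrow> (nat \<Rightarrow> int) \<Rightarrow> int \<Rightarrow> nat \<Rightarrow> nat \<Rightarrow> nat \<Rightarrow> int" where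
  "nu e f N I J K = int (alg_dim (U_tilde e f N I J K)) - int (alg_dim (U_loc e f N I J K))"

text \<open>Triples accessory to (I,J,K); the unordered pair {i,j} is represented by (i,j), i<j.\<close>
definition accessory :: "(nat \<Rightarrow> int) \<Rightarrow> (nat \<Rightarrow> int) \<Rightarrow> int \<Rightarrow> nat \<Rightarrow> nat \<Rightarrow> nat \<Rightarrow> (nat \<times> nat \<times> nat) set" where
  "accessory e f N I J K = {(i,j,k). 1 \<le> i \<and> i < j \<and> j \<le> 5 \<and> 1 \<le> k \<and> k \<le> 4 \<and>
      0 \<le> ddeg e f N k i j \<and>
      ({i,j} = {I,J} \<or>
       (k = K \<and> (\<exists>j'. {i,j} = {I,j'} \<and> j' \<notin> {I,J})) \<or>
       (k = K \<and> (\<exists>i'. {i,j} = {i',J} \<and> i' \<notin> {I,J})))}"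

end

theory Submission
  imports Defs
begin

text \<open>In case (i) every entry constrained by the normal form has degree at most 0: by
  monotonicity of the splitting types these degrees are bounded by d^(4)_12, d^(1)_15,
  d^(1)_24 < 0 or equal d^(1)_25 = 0. A form of degree at most 0 is divisible by a positive
  power of a linear form only if it is zero, so the normal form does not depend on the point,
  the two loci coincide and nu = 0. In the other cases the accessory triples are exhibited
  explicitly, each of degree at least one of the degrees made nonnegative by (a), and the
  positivity of d^(K)_IJ is a linear inequality between the splitting types.\<close>

lemma funpow_lin_mul_zero [simp]: "(lin_mul \<alpha> \<beta> ^^ r) (\<lambda>_. 0) = (\<lambda>_. 0)"
  by (induction r) (auto simp: lin_mul_def)

lemma vanish_ord_zero: "vanish_ord \<alpha> \<beta> r d (\<lambda>_. 0)"
  unfolding vanish_ord_def by (intro exI[of _ "\<lambda>_. 0"]) simp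

lemma vanish_ord_nonpos_iff:
  assumes "d \<le> 0" "1 \<le> r"
  shows "vanish_ord \<alpha> \<beta> r d c \<longleftrightarrow> (\<forall>m. int m \<le> d \<longrightarrow> c m = 0)"
proof
  assume "vanish_ord \<alpha> \<beta> r d c"
  then obtain G where G0: "\<forall>m. d < int m + int r \<longrightarrow> G m = 0"
    and c: "\<forall>m. int m \<le> d \<longrightarrow> c m = (lin_mul \<alpha> \<beta> ^^ r) G m"
    unfolding vanish_ord_def by blast
  have "G = (\<lambda>_. 0)" using G0 assms by fastforce
  with c show "\<forall>m. int m \<le> d \<longrightarrow> c m = 0" by simp
next
  assume "\<forall>m. int m \<le> d \<longrightarrow> c m = 0"
  then show "vanish_ord \<alpha> \<beta> r d c"
    unfolding vanish_ord_def by (intro exI[of _ "\<lambda>_. 0"]) simp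
qed

lemma vanish_ord_nonpos_point_indep:
  assumes "d \<le> 0" "1 \<le> r"
  shows "vanish_ord \<alpha> \<beta> r d c \<longleftrightarrow> vanish_ord \<alpha>' \<beta>' r d c"
  using vanish_ord_nonpos_iff[OF assms] by simp

lemma entry_diag: "entry s k i i = (\<lambda>_. 0)"
  by (auto simp: entry_def)

lemma normal_form_point_indep:
  assumes IJ: "\<And>k. k \<in> {1..4} \<Longrightarrow> ddeg e f N k I J \<le> 0"
    and Ij: "\<And>j. j \<in> {1..5} \<Longrightarrow> j \<noteq> I \<Longrightarrow> ddeg e f N K I j \<le> 0"
    and iJ: "\<And>i. i \<in> {1..5} \<Longrightarrow> i \<noteq> J \<Longrightarrow> ddeg e f N K i J \<le> 0"
    and K: "K \<in> {1..4}"
  shows "normal_form e f N I J K \<alpha> \<beta> s \<longleftrightarrow> normal_form e f N I J K \<alpha>' \<beta>' s"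
proof -
  note indep = vanish_ord_nonpos_point_indep[where \<alpha> = \<alpha> and \<beta> = \<beta> and \<alpha>' = \<alpha>' and \<beta>' = \<beta>']
  have pair: "(\<forall>k\<in>{1..4}. vanish_ord \<alpha> \<beta> 1 (ddeg e f N k I J) (entry s k I J)) \<longleftrightarrow>
      (\<forall>k\<in>{1..4}. vanish_ord \<alpha>' \<beta>' 1 (ddeg e f N k I J) (entry s k I J))"
    using indep[OF IJ] by (meson order_refl)
  have row: "(\<forall>j\<in>{1..5}. vanish_ord \<alpha> \<beta> 1 (ddeg e f N K I j) (entry s K I j)) \<longleftrightarrow>
      (\<forall>j\<in>{1..5}. vanish_ord \<alpha>' \<beta>' 1 (ddeg e f N K I j) (entry s K I j))"
  proof (rule ball_cong[OF refl])
    show "vanish_ord \<alpha> \<beta> 1 (ddeg e f N K I j) (entry s K I j) \<longleftrightarrow>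
        vanish_ord \<alpha>' \<beta>' 1 (ddeg e f N K I j) (entry s K I j)" if "j \<in> {1..5}" for j
      using indep[OF Ij[OF that]] by (cases "j = I") (simp_all add: entry_diag vanish_ord_zero)
  qed
  have col: "(\<forall>i\<in>{1..5}. vanish_ord \<alpha> \<beta> 1 (ddeg e f N K i J) (entry s K i J)) \<longleftrightarrow>
      (\<forall>i\<in>{1..5}. vanish_ord \<alpha>' \<beta>' 1 (ddeg e f N K i J) (entry s K i J))"
  proof (rule ball_cong[OF refl])
    show "vanish_ord \<alpha> \<beta> 1 (ddeg e f N K i J) (entry s K i J) \<longleftrightarrow>
        vanish_ord \<alpha>' \<beta>' 1 (ddeg e f N K i J) (entry s K i J)" if "i \<in> {1..5}" for i
      using indep[OF iJ[OF that]] by (cases "i = J") (simp_all add: entry_diag vanish_ord_zero)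
  qed
  have corner: "vanish_ord \<alpha> \<beta> 2 (ddeg e f N K I J) (entry s K I J) \<longleftrightarrow>
      vanish_ord \<alpha>' \<beta>' 2 (ddeg e f N K I J) (entry s K I J)"
    using indep[OF IJ[OF K]] by simp
  show ?thesis
    unfolding normal_form_def using pair row col corner by (simp only:)
qed

lemma U_tilde_eq_U_loc:
  assumes "\<And>\<alpha> \<beta> s. normal_form e f N I J K \<alpha> \<beta> s \<longleftrightarrow> normal_form e f N I J K 0 1 s"
  shows "U_tilde e f N I J K = U_loc e f N I J K"
  unfolding U_tilde_def U_loc_def
proof (intro Collect_cong conj_cong refl iffI)
  fix s assume "\<exists>\<alpha> \<beta>. (\<alpha>, \<beta>) \<noteq> (0, 0) \<and> normal_form e f N I J K \<alpha> \<beta> s"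
  then show "normal_form e f N I J K 0 1 s" using assms by blast
next
  fix s assume "normal_form e f N I J K 0 1 s"
  then show "\<exists>\<alpha> \<beta>. (\<alpha>, \<beta>) \<noteq> (0, 0) \<and> normal_form e f N I J K \<alpha> \<beta> s"
    by (intro exI[of _ 0] exI[of _ 1]) simp
qed

lemma nu_eq_0_if_degrees_nonpos:
  assumes "\<And>k. k \<in> {1..4} \<Longrightarrow> ddeg e f N k I J \<le> 0"
    and "\<And>j. j \<in> {1..5} \<Longrightarrow> j \<noteq> I \<Longrightarrow> ddeg e f N K I j \<le> 0"
    and "\<And>i. i \<in> {1..5} \<Longrightarrow> i \<noteq> J \<Longrightarrow> ddeg e f N K i J \<le> 0"
    and "K \<in> {1..4}"
  shows "nu e f N I J K = 0"
  using U_tilde_eq_U_loc[OF normal_form_point_indep[OF assms]] by (simp add: nu_def)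

lemma finite_accessory: "finite (accessory e f N I J K)"
proof (rule finite_subset)
  show "accessory e f N I J K \<subseteq> {1..5} \<times> {1..5} \<times> {1..4}"
    by (auto simp: accessory_def)
qed simp

lemma card_le_card_accessory:
  "S \<subseteq> accessory e f N I J K \<Longrightarrow> card S \<le> card (accessory e f N I J K)"
  by (rule card_mono[OF finite_accessory])

locale splitting_types =
  fixes e f :: "nat \<Rightarrow> int" and N :: int
  assumes e_pos: "1 \<le> e 1"
    and e_mono: "e 1 \<le> e 2" "e 2 \<le> e 3" "e 3 \<le> e 4"
    and e_sum: "e 1 + e 2 + e 3 + e 4 = N"
    and f_mono: "f 1 \<le> f 2" "f 2 \<le> f 3" "f 3 \<le> f 4" "f 4 \<le> f 5"
    and f_sum: "f 1 + f 2 + f 3 + f 4 + f 5 = 2 * N"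
begin

abbreviation d :: "nat \<Rightarrow> nat \<Rightarrow> nat \<Rightarrow> int" where
  "d \<equiv> ddeg e f N"

lemma e_le_e4: "k \<in> {1..4} \<Longrightarrow> e k \<le> e 4"
  using e_mono by (auto simp: numeral_eq_Suc le_Suc_eq)

lemma nu_121_eq_0:
  assumes "d 1 1 5 < 0" "d 1 2 4 < 0" "d 4 1 2 < 0" "d 1 2 5 = 0"
  shows "nu e f N 1 2 1 = 0"
proof (rule nu_eq_0_if_degrees_nonpos)
  show "d k 1 2 \<le> 0" if "k \<in> {1..4}" for k
    using e_le_e4[OF that] assms by (simp add: ddeg_def)
  show "d 1 1 j \<le> 0" if "j \<in> {1..5}" "j \<noteq> 1" for j
  proof -
    have "j \<in> {2,3,4,5}" using that by auto
    then show ?thesis using assms e_mono f_mono by (auto simp: ddeg_def)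
  qed
  show "d 1 i 2 \<le> 0" if "i \<in> {1..5}" "i \<noteq> 2" for i
  proof -
    have "i \<in> {1,3,4,5}" using that by auto
    then show ?thesis using assms e_mono f_mono by (auto simp: ddeg_def)
  qed
qed simp

lemma card_accessory_121:
  assumes "d 1 2 5 = 0"
  shows "1 \<le> card (accessory e f N 1 2 1)"
proof -
  have "{(2,5,1)} \<subseteq> accessory e f N 1 2 1"
    using assms by (simp add: accessory_def doubleton_eq_iff)
  from card_le_card_accessory[OF this] show ?thesis by simp
qed

lemma card_accessory_451:
  assumes "0 \<le> d 1 3 4" "0 \<le> d 1 2 5"
  shows "7 \<le> card (accessory e f N 4 5 1)"
proof -
  have "{(4,5,1),(4,5,2),(4,5,3),(4,5,4),(3,4,1),(3,5,1),(2,5,1)} \<subseteq> accessory e f N 4 5 1"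
    using assms e_mono f_mono unfolding accessory_def by (simp add: ddeg_def doubleton_eq_iff)
  from card_le_card_accessory[OF this] show ?thesis by simp
qed

lemma card_accessory_454:
  assumes "0 \<le> d 1 3 4" "0 \<le> d 3 1 4" "0 \<le> d 2 1 5"
  shows "10 \<le> card (accessory e f N 4 5 4)"
proof -
  have "{(4,5,1),(4,5,2),(4,5,3),(4,5,4),(1,4,4),(2,4,4),(3,4,4),(1,5,4),(2,5,4),(3,5,4)}
      \<subseteq> accessory e f N 4 5 4"
    using assms e_mono f_mono unfolding accessory_def by (simp add: ddeg_def doubleton_eq_iff)
  from card_le_card_accessory[OF this] show ?thesis by simp
qed

text \<open>d^(1)_45 = d^(1)_34 + d^(1)_25 - d^(1)_23, and d^(1)_23 \<le> d^(1)_24 < 0.\<close>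
lemma d_145_pos:
  assumes "0 \<le> d 1 3 4" "0 \<le> d 1 2 5" "d 1 2 4 < 0"
  shows "1 \<le> d 1 4 5"
  using assms f_mono by (simp add: ddeg_def)

text \<open>5 (f 4 + f 5) \<ge> 4 N and 4 e 4 \<ge> N give 20 d^(4)_45 \<ge> N > 0.\<close>
lemma d_445_pos: "1 \<le> d 4 4 5"
  using e_pos e_mono e_sum f_mono f_sum by (simp add: ddeg_def)

end

theorem lemma5p13:
  fixes g :: nat and e f :: "nat \<Rightarrow> int" and I J K :: nat and N :: int
  assumes N: "N = int g + 4"
    and e: "1 \<le> e 1" "e 1 \<le> e 2" "e 2 \<le> e 3" "e 3 \<le> e 4" "e 1 + e 2 + e 3 + e 4 = N"
    and f: "f 1 \<le> f 2" "f 2 \<le> f 3" "f 3 \<le> f 4" "f 4 \<le> f 5"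
           "f 1 + f 2 + f 3 + f 4 + f 5 = 2 * N"
    and a: "\<forall>i j k. 1 \<le> i \<and> i < j \<and> j \<le> 5 \<and> 1 \<le> k \<and> k \<le> 4 \<and> i + j + k = 8
               \<longrightarrow> 0 \<le> ddeg e f N k i j"
    and b: "ddeg e f N 1 1 5 < 0 \<and> ddeg e f N 1 2 4 < 0 \<and> ddeg e f N 4 1 2 < 0
               \<longrightarrow> ddeg e f N 1 2 5 = 0"
    and cases: "((I, J, K) = (1, 2, 1) \<and> ddeg e f N 1 1 5 < 0 \<and> ddeg e f N 1 2 4 < 0
                    \<and> ddeg e f N 4 1 2 < 0)
              \<or> ((I, J, K) = (4, 5, 1) \<and> ddeg e f N 1 1 5 < 0 \<and> ddeg e f N 1 2 4 < 0)
              \<or> (I, J, K) = (4, 5, 4)"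
  shows "I + J + K - 3 \<le> card (accessory e f N I J K)
         \<and> ((I, J, K) = (1, 2, 1) \<longrightarrow> nu e f N I J K = 0)
         \<and> ((I, J, K) \<noteq> (1, 2, 1) \<longrightarrow> 1 \<le> ddeg e f N K I J)"
proof -
  interpret splitting_types e f N
    using e f by unfold_locales
  have a_instances: "0 \<le> d 1 3 4" "0 \<le> d 1 2 5" "0 \<le> d 3 1 4" "0 \<le> d 2 1 5"
    using a by simp_all
  from cases consider
      (i) "I = 1" "J = 2" "K = 1" "d 1 1 5 < 0" "d 1 2 4 < 0" "d 4 1 2 < 0"
    | (ii) "I = 4" "J = 5" "K = 1" "d 1 1 5 < 0" "d 1 2 4 < 0"
    | (iii) "I = 4" "J = 5" "K = 4"
    by auto
  then show ?thesis
  proof cases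
    case i
    with b have "d 1 2 5 = 0" by simp
    with i show ?thesis using nu_121_eq_0 card_accessory_121 by simp
  next
    case ii
    then show ?thesis using a_instances card_accessory_451 d_145_pos by simp
  next
    case iii
    then show ?thesis using a_instances card_accessory_454 d_445_pos by simp
  qed
qed

end
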